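(* Assume: (i) for every $t$ the local noises $w^1_t,\ldots,w^n_t$ are i.i.d.; (ii) there are $K_T,K_c>0$ with $|T(s',s,m)-T(s',s,m')|\le K_T\|m-m'\|_\infty$ and $c(m,\hat m,a)\le K_c\|m-\hat m\|_\infty$ for all $s',s\in\mathcal{S}$, $a\in\{0,1\}$, $m,m',\hat m\in\mathcal{P}(\mathcal{S})$; (iii) $\gamma K_p<1$, where $K_p>0$ is a constant with $\|\bar T(p)-\bar T(\hat p)\|_\infty\le K_p\|p-\hat p\|_\infty$ for all $p,\hat p\in\mathcal{P}(\mathcal{S})$. Consider the estimator that never collects data: $\hat m_1=m_1$ and $\hat m_t=\bar T\circ\cdots\circ\bar T(\hat m_1)$ ($t-1$ compositions) for $t\ge2$. Then the total expected discounted cost of this estimator is bounded and converges to zero at rate $1/\sqrt n$: $$\mathbb{E}\Big[\sum_{t=1}^\infty\gamma^{t-1}c(m_t,\hat m_t,0)\Big]\le\frac{\gamma K_c}{(1-\gamma)(1-\gamma K_p)}\,\mathcal{O}\Big(\frac1{\sqrt n}\Big),$$ where the $\mathcal{O}(1/\sqrt n)$ term depends on the variance of the local noises.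
   Context: $n$ nodes with states $s^i_t$ in a finite set $\mathcal{S}\subset\mathbb{R}$, time $t\in\mathbb{N}$. Empirical distribution $m_t(s)=\frac1n\sum_{i=1}^n\mathbb{1}\{s^i_t=s\}$. Dynamics $s^i_{t+1}=f(s^i_t,m_t,w^i_t)$ with local noise $w^i_t$ in a finite set $\mathcal{W}$ with common distribution $P_W$; $f$ is defined for $m\in\mathcal{P}(\mathcal{S})$ (probability vectors on $\mathcal{S}$). $T(s',s,m)=\sum_{w\in\mathcal{W}}P_W(w)\mathbb{1}\{s'=f(s,m,w)\}$. Define $\bar T:\mathcal{P}(\mathcal{S})\to\mathcal{P}(\mathcal{S})$ by $\bar T(p)=\sum_{s\in\mathcal{S}}p(s)T(\cdot,s,p)$. Cost $c:\mathcal{P}(\mathcal{S})^2\times\{0,1\}\to\mathbb{R}_{\ge0}$; discount $\gamma\in(0,1)$. Initial states and noises are mutually independent with finite variances. *)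

theory Defs
  imports "HOL-Probability.Probability"
begin

text \<open>Probability vectors on the finite state set S, represented as functions
  real \<Rightarrow> real vanishing outside S.\<close>
definition probvec :: "real set \<Rightarrow> (real \<Rightarrow> real) \<Rightarrow> bool" where
  "probvec S p \<longleftrightarrow> (\<forall>s\<in>S. 0 \<le> p s) \<and> (\<forall>s. s \<notin> S \<longrightarrow> p s = 0) \<and> sum p S = 1"

definition supnorm :: "real set \<Rightarrow> (real \<Rightarrow> real) \<Rightarrow> real" where
  "supnorm S p = Max ((\<lambda>s. \<bar>p s\<bar>) ` S)"

definition emp :: "nat \<Rightarrow> (nat \<Rightarrow> real) \<Rightarrow> (real \<Rightarrow> real)" where
  "emp n st = (\<lambda>s. real (card {i\<in>{..<n}. st i = s}) / real n)"

definition Tk :: "'w pmf \<Rightarrow> (real \<Rightarrow> (real \<Rightarrow> real) \<Rightarrow> 'w \<Rightarrow> real)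
                  \<Rightarrow> real \<Rightarrow> real \<Rightarrow> (real \<Rightarrow> real) \<Rightarrow> real" where
  "Tk PW f s' s m = (\<Sum>w\<in>set_pmf PW. pmf PW w * (if s' = f s m w then 1 else 0))"

definition Tbar :: "real set \<Rightarrow> 'w pmf \<Rightarrow> (real \<Rightarrow> (real \<Rightarrow> real) \<Rightarrow> 'w \<Rightarrow> real)
                    \<Rightarrow> (real \<Rightarrow> real) \<Rightarrow> (real \<Rightarrow> real)" where
  "Tbar S PW f p = (\<lambda>s'. \<Sum>s\<in>S. p s * Tk PW f s' s p)"

text \<open>Joint state trajectory. Index k corresponds to time t = k+1:
  states ... x 0 is the vector of initial states s^i_1, and the noise w i k
  (i.e. w^i_{k+1}) drives the step from time k+1 to time k+2.\<close>
primrec states :: "(real \<Rightarrow> (real \<Rightarrow> real) \<Rightarrow> 'w \<Rightarrow> real) \<Rightarrow> nat \<Rightarrow> (nat \<Rightarrow> 'a \<Rightarrow> real)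
                   \<Rightarrow> (nat \<Rightarrow> nat \<Rightarrow> 'a \<Rightarrow> 'w) \<Rightarrow> 'a \<Rightarrow> nat \<Rightarrow> (nat \<Rightarrow> real)" where
  "states f n s0 w x 0 = (\<lambda>i. s0 i x)"
| "states f n s0 w x (Suc k) =
     (\<lambda>i. f (states f n s0 w x k i) (emp n (states f n s0 w x k)) (w i k x))"

text \<open>Family of all primitive random variables (initial states and noises),
  packed into a common sum type so that mutual independence can be stated.\<close>
definition prim_rv :: "(nat \<Rightarrow> 'a \<Rightarrow> real) \<Rightarrow> (nat \<Rightarrow> nat \<Rightarrow> 'a \<Rightarrow> 'w)
                       \<Rightarrow> nat + (nat \<times> nat) \<Rightarrow> 'a \<Rightarrow> real + 'w" where
  "prim_rv s0 w j = (case j of Inl i \<Rightarrow> (\<lambda>x. Inl (s0 i x))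
                              | Inr (i, t) \<Rightarrow> (\<lambda>x. Inr (w i t x)))"

end

theory Submission
  imports Defs
begin

(* Let e_k be the sup distance between the empirical distribution m_k and the deterministic
   prediction Tbar^k(m_1).  The Lipschitz bound on Tbar gives e_(k+1) <= d_k + K_p e_k with
   d_k = |m_(k+1) - Tbar(m_k)|.  Given the states at time k, the indicators 1{s^i_(k+1) = s'}
   are independent across the nodes i with means T(s', s^i_k, m_k), so m_(k+1)(s') - Tbar(m_k)(s')
   is the average of n orthogonal centred terms bounded by 1.  Its second moment is at most 1/n,
   hence E d_k <= |S| / sqrt n by Cauchy-Schwarz.  Unrolling the recursion in expectation and
   summing the discounted series gives the bound with C = |S|, through the Lipschitz bound on c.
   All expectations are computed as finite sums over the values of the finitely many primitive
   variables a quantity depends on, weighted by the product of their point probabilities. *)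

section \<open>Sup norm, empirical distributions and the mean-field map\<close>

lemma supnorm_ge: "finite S \<Longrightarrow> s \<in> S \<Longrightarrow> \<bar>h s\<bar> \<le> supnorm S h"
  unfolding supnorm_def by (rule Max_ge) auto

lemma supnorm_le: "finite S \<Longrightarrow> S \<noteq> {} \<Longrightarrow> (\<And>s. s \<in> S \<Longrightarrow> \<bar>h s\<bar> \<le> B) \<Longrightarrow> supnorm S h \<le> B"
  unfolding supnorm_def by (subst Max_le_iff) auto

lemma supnorm_nonneg: "finite S \<Longrightarrow> S \<noteq> {} \<Longrightarrow> 0 \<le> supnorm S h"
  by (meson abs_ge_zero ex_in_conv order_trans supnorm_ge)

lemma supnorm_zero: "S \<noteq> {} \<Longrightarrow> supnorm S (\<lambda>_. 0) = 0"
  by (simp add: supnorm_def image_constant_conv)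

lemma supnorm_triangle:
  assumes "finite S" "S \<noteq> {}"
  shows "supnorm S (\<lambda>x. p x - q x) \<le> supnorm S (\<lambda>x. p x - r x) + supnorm S (\<lambda>x. r x - q x)"
proof (rule supnorm_le[OF assms])
  fix s assume s: "s \<in> S"
  have "\<bar>p s - r s\<bar> \<le> supnorm S (\<lambda>x. p x - r x)" "\<bar>r s - q s\<bar> \<le> supnorm S (\<lambda>x. r x - q x)"
    using supnorm_ge[OF assms(1) s, of "\<lambda>x. p x - r x"] supnorm_ge[OF assms(1) s, of "\<lambda>x. r x - q x"]
    by simp_all
  then show "\<bar>p s - q s\<bar> \<le> supnorm S (\<lambda>x. p x - r x) + supnorm S (\<lambda>x. r x - q x)" by linarith
qed

lemma supnorm_le_sum_abs: "finite S \<Longrightarrow> S \<noteq> {} \<Longrightarrow> supnorm S h \<le> (\<Sum>s\<in>S. \<bar>h s\<bar>)"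
  by (rule supnorm_le) (auto intro: member_le_sum)

lemma probvec_le_1:
  assumes "finite S" "probvec S p"
  shows "p s \<le> 1"
proof (cases "s \<in> S")
  case True
  then have "p s \<le> sum p S" by (rule member_le_sum) (use assms in \<open>auto simp: probvec_def\<close>)
  then show ?thesis using assms by (simp add: probvec_def)
qed (use assms in \<open>simp add: probvec_def\<close>)

lemma supnorm_diff_probvec_le_1:
  assumes "finite S" "S \<noteq> {}" "probvec S p" "probvec S q"
  shows "supnorm S (\<lambda>x. p x - q x) \<le> 1"
proof (rule supnorm_le[OF assms(1,2)])
  fix s assume "s \<in> S"
  then have "0 \<le> p s" "0 \<le> q s" "p s \<le> 1" "q s \<le> 1"
    using assms probvec_le_1 unfolding probvec_def by blast+
  then show "\<bar>p s - q s\<bar> \<le> 1" by linarith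
qed

lemma emp_cong: "(\<And>i. i < n \<Longrightarrow> a i = b i) \<Longrightarrow> emp n a = emp n b"
  unfolding emp_def by (rule ext) (metis (mono_tags, lifting) lessThan_iff mem_Collect_eq)

lemma emp_eq_average: "emp n st s = (\<Sum>i<n. if s = st i then 1 else 0) / real n"
proof -
  have "real (card {i\<in>{..<n}. st i = s}) = (\<Sum>i\<in>{i\<in>{..<n}. st i = s}. 1)" by simp
  also have "\<dots> = (\<Sum>i<n. if s = st i then 1 else 0)"
    by (subst sum.inter_filter) (auto intro: sum.cong)
  finally show ?thesis by (simp add: emp_def)
qed

lemma sum_emp_mult:
  assumes "finite S" "\<And>i. i < n \<Longrightarrow> st i \<in> S"
  shows "(\<Sum>s\<in>S. emp n st s * h s) = (\<Sum>i<n. h (st i)) / real n"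
proof -
  have "(\<Sum>s\<in>S. emp n st s * h s) = (\<Sum>s\<in>S. \<Sum>i\<in>{i\<in>{..<n}. st i = s}. h (st i)) / real n"
    unfolding emp_def by (simp add: sum_divide_distrib)
  also have "(\<Sum>s\<in>S. \<Sum>i\<in>{i\<in>{..<n}. st i = s}. h (st i)) = (\<Sum>i<n. h (st i))"
    by (rule sum.group) (use assms in auto)
  finally show ?thesis .
qed

lemma emp_probvec:
  assumes "finite S" "1 \<le> n" "\<And>i. i < n \<Longrightarrow> st i \<in> S"
  shows "probvec S (emp n st)"
proof -
  have "sum (emp n st) S = 1"
    using sum_emp_mult[OF assms(1,3), where h="\<lambda>_. 1"] assms(2) by simp
  moreover have "emp n st s = 0" if "s \<notin> S" for s
    unfolding emp_def using assms(3) that by (auto simp: card_eq_0_iff)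
  ultimately show ?thesis unfolding probvec_def emp_def by auto
qed

lemma Tk_nonneg: "0 \<le> Tk PW f s' s m"
  unfolding Tk_def by (auto intro!: sum_nonneg)

lemma Tk_le_1:
  assumes "finite (set_pmf PW)"
  shows "Tk PW f s' s m \<le> 1"
proof -
  have "Tk PW f s' s m \<le> (\<Sum>w\<in>set_pmf PW. pmf PW w)"
    unfolding Tk_def by (rule sum_mono) auto
  also have "\<dots> = 1" by (rule sum_pmf_eq_1) (use assms in auto)
  finally show ?thesis .
qed

lemma sum_Tk_eq_1:
  assumes "finite S" "finite (set_pmf PW)" "\<And>w. w \<in> set_pmf PW \<Longrightarrow> f s m w \<in> S"
  shows "(\<Sum>s'\<in>S. Tk PW f s' s m) = 1"
proof -
  have "(\<Sum>s'\<in>S. Tk PW f s' s m)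
      = (\<Sum>w\<in>set_pmf PW. pmf PW w * (\<Sum>s'\<in>S. if s' = f s m w then 1 else 0))"
    unfolding Tk_def by (subst sum.swap) (simp add: sum_distrib_left)
  also have "\<dots> = (\<Sum>w\<in>set_pmf PW. pmf PW w)"
    by (rule sum.cong) (use assms in auto)
  also have "\<dots> = 1" by (rule sum_pmf_eq_1) (use assms in auto)
  finally show ?thesis .
qed

lemma Tbar_probvec:
  assumes S: "finite S" and W: "finite (set_pmf PW)"
    and f_in: "\<And>s m w. s \<in> S \<Longrightarrow> probvec S m \<Longrightarrow> w \<in> set_pmf PW \<Longrightarrow> f s m w \<in> S"
    and p: "probvec S p"
  shows "probvec S (Tbar S PW f p)"
proof -
  have "(\<Sum>s'\<in>S. Tbar S PW f p s') = (\<Sum>s\<in>S. p s * (\<Sum>s'\<in>S. Tk PW f s' s p))"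
    unfolding Tbar_def by (subst sum.swap) (simp add: sum_distrib_left)
  also have "\<dots> = sum p S"
    by (rule sum.cong) (use sum_Tk_eq_1[OF S W] f_in p in auto)
  finally have "(\<Sum>s'\<in>S. Tbar S PW f p s') = 1" using p by (simp add: probvec_def)
  moreover have "Tbar S PW f p s' = 0" if "s' \<notin> S" for s'
    unfolding Tbar_def Tk_def using f_in p that by (auto intro!: sum.neutral)
  moreover have "0 \<le> Tbar S PW f p s'" for s'
    unfolding Tbar_def using p by (auto intro!: sum_nonneg simp: Tk_nonneg probvec_def)
  ultimately show ?thesis unfolding probvec_def by auto
qed

lemma funpow_Tbar_probvec:
  assumes "finite S" "finite (set_pmf PW)"
    and "\<And>s m w. s \<in> S \<Longrightarrow> probvec S m \<Longrightarrow> w \<in> set_pmf PW \<Longrightarrow> f s m w \<in> S"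
    and "probvec S p"
  shows "probvec S ((Tbar S PW f ^^ k) p)"
  by (induction k) (use Tbar_probvec[OF assms(1-3)] assms(4) in auto)

lemma Tbar_emp:
  "finite S \<Longrightarrow> (\<And>i. i < n \<Longrightarrow> st i \<in> S) \<Longrightarrow>
   Tbar S PW f (emp n st) s' = (\<Sum>i<n. Tk PW f s' (st i) (emp n st)) / real n"
  unfolding Tbar_def by (rule sum_emp_mult)

lemma discounted_sum_le_of_linear_recursion:
  fixes \<gamma> K B U :: real and E :: "nat \<Rightarrow> real"
  assumes \<gamma>: "0 < \<gamma>" "\<gamma> < 1" and contr: "\<gamma> * K < 1"
    and E_0: "E 0 = 0" and E_bounds: "\<And>k. 0 \<le> E k" "\<And>k. E k \<le> U"
    and E_Suc: "\<And>k. E (Suc k) \<le> B + K * E k"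
  shows "summable (\<lambda>k. \<gamma> ^ k * E k)"
    and "(\<Sum>k. \<gamma> ^ k * E k) \<le> \<gamma> * B / ((1 - \<gamma>) * (1 - \<gamma> * K))"
proof -
  have geo: "summable (\<lambda>k. \<gamma> ^ k)" using \<gamma> by (simp add: summable_geometric)
  show sm: "summable (\<lambda>k. \<gamma> ^ k * E k)"
    by (rule summable_comparison_test'[OF summable_mult2[OF geo, of U], of 0])
      (use \<gamma> E_bounds in \<open>auto intro: mult_left_mono\<close>)
  define \<Phi> where "\<Phi> = (\<Sum>k. \<gamma> ^ k * E k)"
  have sm_shift: "summable (\<lambda>k. \<gamma> ^ Suc k * E (Suc k))"
    using sm by (subst summable_Suc_iff)
  have sm_B: "summable (\<lambda>k. \<gamma> * B * \<gamma> ^ k)" using geo by (rule summable_mult)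
  have sm_K: "summable (\<lambda>k. \<gamma> * K * (\<gamma> ^ k * E k))" using sm by (rule summable_mult)
  have "\<Phi> = (\<Sum>k. \<gamma> ^ Suc k * E (Suc k))"
    using suminf_split_head[OF sm] E_0 unfolding \<Phi>_def by simp
  also have "\<dots> \<le> (\<Sum>k. \<gamma> * B * \<gamma> ^ k + \<gamma> * K * (\<gamma> ^ k * E k))"
  proof (rule suminf_le[OF _ sm_shift summable_add[OF sm_B sm_K]])
    fix k
    have "\<gamma> ^ Suc k * E (Suc k) \<le> \<gamma> ^ Suc k * (B + K * E k)"
      using E_Suc \<gamma> by (intro mult_left_mono) auto
    then show "\<gamma> ^ Suc k * E (Suc k) \<le> \<gamma> * B * \<gamma> ^ k + \<gamma> * K * (\<gamma> ^ k * E k)"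
      by (simp add: algebra_simps)
  qed
  also have "\<dots> = \<gamma> * B / (1 - \<gamma>) + \<gamma> * K * \<Phi>"
    using suminf_add[OF sm_B sm_K] suminf_mult[OF geo, of "\<gamma> * B"] suminf_mult[OF sm, of "\<gamma> * K"]
      suminf_geometric[of \<gamma>] \<gamma> unfolding \<Phi>_def by simp
  finally have "\<Phi> * (1 - \<gamma> * K) \<le> \<gamma> * B / (1 - \<gamma>)" by (simp add: algebra_simps)
  moreover have "0 < 1 - \<gamma> * K" using contr by simp
  ultimately have "\<Phi> \<le> \<gamma> * B / (1 - \<gamma>) / (1 - \<gamma> * K)" by (metis pos_le_divide_eq)
  then show "(\<Sum>k. \<gamma> ^ k * E k) \<le> \<gamma> * B / ((1 - \<gamma>) * (1 - \<gamma> * K))"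
    unfolding \<Phi>_def by (simp add: divide_divide_eq_left)
qed

section \<open>Expectations over finitely many independent discrete variables\<close>

definition prod_weight :: "'i set \<Rightarrow> ('i \<Rightarrow> 'v \<Rightarrow> real) \<Rightarrow> ('i \<Rightarrow> 'v) \<Rightarrow> real" where
  "prod_weight J p \<xi> = (\<Prod>j\<in>J. p j (\<xi> j))"

lemma prod_weight_nonneg: "(\<And>j v. 0 \<le> p j v) \<Longrightarrow> 0 \<le> prod_weight J p \<xi>"
  unfolding prod_weight_def by (simp add: prod_nonneg)

lemma sum_PiE_prod_weight_remove:
  assumes J: "finite J" and a: "a \<in> J"
  shows "(\<Sum>\<xi>\<in>PiE J A. F \<xi> * prod_weight J p \<xi>) =
    (\<Sum>\<xi>\<in>PiE (J - {a}) A. (\<Sum>v\<in>A a. p a v * F (\<xi>(a := v))) * prod_weight (J - {a}) p \<xi>)"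
proof -
  define K where "K = J - {a}"
  have JK: "J = insert a K" and aK: "a \<notin> K" and K: "finite K" using a J by (auto simp: K_def)
  have weight_upd: "prod_weight J p (\<xi>(a := v)) = p a v * prod_weight K p \<xi>" for \<xi> v
  proof -
    have "prod_weight J p (\<xi>(a := v)) = p a v * (\<Prod>j\<in>K. p j ((\<xi>(a := v)) j))"
      unfolding prod_weight_def JK using K aK by simp
    also have "(\<Prod>j\<in>K. p j ((\<xi>(a := v)) j)) = prod_weight K p \<xi>"
      unfolding prod_weight_def by (rule prod.cong) (use aK in auto)
    finally show ?thesis .
  qed
  have "(\<Sum>\<xi>\<in>PiE J A. F \<xi> * prod_weight J p \<xi>) =
      (\<Sum>v\<xi>\<in>A a \<times> PiE K A. (\<lambda>\<xi>. F \<xi> * prod_weight J p \<xi>) ((\<lambda>(v, \<xi>). \<xi>(a := v)) v\<xi>))"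
    unfolding JK PiE_insert_eq by (simp add: sum.reindex[OF inj_combinator[OF aK]])
  also have "\<dots> = (\<Sum>v\<in>A a. \<Sum>\<xi>\<in>PiE K A. F (\<xi>(a := v)) * prod_weight J p (\<xi>(a := v)))"
    by (subst sum.cartesian_product) (simp add: case_prod_beta)
  also have "\<dots> = (\<Sum>\<xi>\<in>PiE K A. \<Sum>v\<in>A a. F (\<xi>(a := v)) * (p a v * prod_weight K p \<xi>))"
    by (subst sum.swap) (simp add: weight_upd)
  also have "\<dots> = (\<Sum>\<xi>\<in>PiE K A. (\<Sum>v\<in>A a. p a v * F (\<xi>(a := v))) * prod_weight K p \<xi>)"
    by (rule sum.cong) (auto simp: sum_distrib_left sum_distrib_right mult_ac)
  finally show ?thesis unfolding K_def .
qed

lemma sum_PiE_prod_weight_eq_0: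
  assumes "finite J" "a \<in> J" "\<And>\<xi>. (\<Sum>v\<in>A a. p a v * F (\<xi>(a := v))) = 0"
  shows "(\<Sum>\<xi>\<in>PiE J A. F \<xi> * prod_weight J p \<xi>) = 0"
  unfolding sum_PiE_prod_weight_remove[OF assms(1,2)] assms(3) by simp

lemma weighted_sum_square_le_of_orthogonal:
  fixes g :: "nat \<Rightarrow> 'x \<Rightarrow> real"
  assumes w_nonneg: "\<And>\<xi>. \<xi> \<in> X \<Longrightarrow> 0 \<le> w \<xi>" and w_sum: "(\<Sum>\<xi>\<in>X. w \<xi>) = 1"
    and g_le_1: "\<And>i \<xi>. \<bar>g i \<xi>\<bar> \<le> 1"
    and orth: "\<And>i l. i < n \<Longrightarrow> l < n \<Longrightarrow> i \<noteq> l \<Longrightarrow> (\<Sum>\<xi>\<in>X. (g i \<xi> * g l \<xi>) * w \<xi>) = 0"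
  shows "(\<Sum>\<xi>\<in>X. (\<Sum>i<n. g i \<xi>)\<^sup>2 * w \<xi>) \<le> real n"
proof -
  have "(\<Sum>i<n. g i \<xi>)\<^sup>2 = (\<Sum>i<n. \<Sum>l<n. g i \<xi> * g l \<xi>)" for \<xi>
    by (simp only: power2_eq_square sum_product)
  then have "(\<Sum>\<xi>\<in>X. (\<Sum>i<n. g i \<xi>)\<^sup>2 * w \<xi>) = (\<Sum>i<n. \<Sum>l<n. \<Sum>\<xi>\<in>X. (g i \<xi> * g l \<xi>) * w \<xi>)"
    by (simp add: sum_distrib_right sum.swap[of _ X])
  also have "\<dots> = (\<Sum>i<n. \<Sum>\<xi>\<in>X. (g i \<xi> * g i \<xi>) * w \<xi>)"
  proof (rule sum.cong[OF refl])
    fix i assume "i \<in> {..<n}"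
    then have "(\<Sum>l<n. \<Sum>\<xi>\<in>X. (g i \<xi> * g l \<xi>) * w \<xi>) = (\<Sum>l\<in>{i}. \<Sum>\<xi>\<in>X. (g i \<xi> * g l \<xi>) * w \<xi>)"
      by (intro sum.mono_neutral_right) (auto simp: orth)
    then show "(\<Sum>l<n. \<Sum>\<xi>\<in>X. (g i \<xi> * g l \<xi>) * w \<xi>) = (\<Sum>\<xi>\<in>X. (g i \<xi> * g i \<xi>) * w \<xi>)"
      by simp
  qed
  also have "\<dots> \<le> (\<Sum>i<n. \<Sum>\<xi>\<in>X. w \<xi>)"
  proof (intro sum_mono)
    fix i \<xi> assume "\<xi> \<in> X"
    have "g i \<xi> * g i \<xi> \<le> 1"
      using g_le_1[of i \<xi>] by (simp add: abs_le_square_iff[of _ 1, simplified] power2_eq_square[symmetric])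
    then show "(g i \<xi> * g i \<xi>) * w \<xi> \<le> w \<xi>"
      using w_nonneg[OF \<open>\<xi> \<in> X\<close>] by (simp add: mult_left_le_one_le)
  qed
  also have "\<dots> = real n" using w_sum by simp
  finally show ?thesis .
qed

lemma weighted_sum_abs_le_sqrt:
  fixes G :: "'x \<Rightarrow> real"
  assumes w_nonneg: "\<And>\<xi>. \<xi> \<in> X \<Longrightarrow> 0 \<le> w \<xi>" and w_sum: "(\<Sum>\<xi>\<in>X. w \<xi>) = 1"
  shows "(\<Sum>\<xi>\<in>X. \<bar>G \<xi>\<bar> * w \<xi>) \<le> sqrt (\<Sum>\<xi>\<in>X. (G \<xi>)\<^sup>2 * w \<xi>)"
proof (rule real_le_rsqrt)
  have "(\<Sum>\<xi>\<in>X. \<bar>G \<xi>\<bar> * w \<xi>) = (\<Sum>\<xi>\<in>X. (\<bar>G \<xi>\<bar> * sqrt (w \<xi>)) * sqrt (w \<xi>))"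
    by (rule sum.cong) (use w_nonneg in \<open>auto simp: mult.assoc\<close>)
  then have "(\<Sum>\<xi>\<in>X. \<bar>G \<xi>\<bar> * w \<xi>)\<^sup>2 \<le>
      (\<Sum>\<xi>\<in>X. (\<bar>G \<xi>\<bar> * sqrt (w \<xi>))\<^sup>2) * (\<Sum>\<xi>\<in>X. (sqrt (w \<xi>))\<^sup>2)"
    using Cauchy_Schwarz_ineq_sum by metis
  also have "(\<Sum>\<xi>\<in>X. (sqrt (w \<xi>))\<^sup>2) = 1" using w_nonneg w_sum by simp
  also have "(\<Sum>\<xi>\<in>X. (\<bar>G \<xi>\<bar> * sqrt (w \<xi>))\<^sup>2) = (\<Sum>\<xi>\<in>X. (G \<xi>)\<^sup>2 * w \<xi>)"
    by (rule sum.cong) (use w_nonneg in \<open>auto simp: power_mult_distrib\<close>)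
  finally show "(\<Sum>\<xi>\<in>X. \<bar>G \<xi>\<bar> * w \<xi>)\<^sup>2 \<le> (\<Sum>\<xi>\<in>X. (G \<xi>)\<^sup>2 * w \<xi>)" by simp
qed

lemma (in prob_space) indep_vars_finite_range_expectation:
  fixes X :: "'i \<Rightarrow> 'a \<Rightarrow> 'v" and H :: "('i \<Rightarrow> 'v) \<Rightarrow> real"
  assumes indep: "indep_vars (\<lambda>_. count_space UNIV) X I"
    and J: "finite J" "J \<subseteq> I" "J \<noteq> {}"
    and A: "\<And>j. j \<in> J \<Longrightarrow> finite (A j)"
    and X_in: "\<And>j x. j \<in> J \<Longrightarrow> x \<in> space M \<Longrightarrow> X j x \<in> A j"
    and H_local: "\<And>\<xi> \<xi>'. (\<And>j. j \<in> J \<Longrightarrow> \<xi> j = \<xi>' j) \<Longrightarrow> H \<xi> = H \<xi>'"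
  shows "integrable M (\<lambda>x. H (\<lambda>j. X j x))"
    and "(\<integral>x. H (\<lambda>j. X j x) \<partial>M) =
           (\<Sum>\<xi>\<in>PiE J A. H \<xi> * prod_weight J (\<lambda>j v. prob {x\<in>space M. X j x = v}) \<xi>)"
proof -
  define Ev where "Ev \<xi> = {x\<in>space M. \<forall>j\<in>J. X j x = \<xi> j}" for \<xi>
  have point_event: "{x\<in>space M. X j x = v} \<in> events" if "j \<in> I" for j v
  proof -
    have "X j \<in> measurable M (count_space UNIV)" using indep that unfolding indep_vars_def2 by auto
    then have "X j -` {v} \<inter> space M \<in> events" by (rule measurable_sets) simp
    moreover have "X j -` {v} \<inter> space M = {x\<in>space M. X j x = v}" by auto
    ultimately show ?thesis by simp
  qed
  have Ev_eq: "Ev \<xi> = (\<Inter>j\<in>J. X j -` {\<xi> j} \<inter> space M)" for \<xi>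
    unfolding Ev_def using J(3) by auto
  have Ev_event: "Ev \<xi> \<in> events" for \<xi>
    unfolding Ev_eq using J point_event
    by (intro sets.finite_INT) (auto simp: vimage_def Int_def conj_commute)
  have Ev_prob: "prob (Ev \<xi>) = prod_weight J (\<lambda>j v. prob {x\<in>space M. X j x = v}) \<xi>" for \<xi>
  proof -
    have "prob (Ev \<xi>) = (\<Prod>j\<in>J. prob (X j -` {\<xi> j} \<inter> space M))"
      unfolding Ev_eq
    proof (rule indep_setsD[where F="\<lambda>i. {X i -` A \<inter> space M | A. A \<in> sets (count_space UNIV)}"])
      show "indep_sets (\<lambda>i. {X i -` A \<inter> space M |A. A \<in> sets (count_space UNIV)}) I"
        using indep unfolding indep_vars_def2 by auto
    qed (use J in auto)
    then show ?thesis
      unfolding prod_weight_def by (simp add: vimage_def Int_def conj_commute)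
  qed
  have H_eq: "H (\<lambda>j. X j x) = (\<Sum>\<xi>\<in>PiE J A. H \<xi> * indicator (Ev \<xi>) x)" if x: "x \<in> space M" for x
  proof -
    define \<xi>x where "\<xi>x = restrict (\<lambda>j. X j x) J"
    have \<xi>x: "\<xi>x \<in> PiE J A" unfolding \<xi>x_def using X_in x by auto
    have "x \<in> Ev \<xi> \<longleftrightarrow> \<xi> = \<xi>x" if "\<xi> \<in> PiE J A" for \<xi>
      using that x unfolding \<xi>x_def Ev_def by (auto simp: PiE_def extensional_def fun_eq_iff)
    then have "(\<Sum>\<xi>\<in>PiE J A. H \<xi> * indicator (Ev \<xi>) x) = (\<Sum>\<xi>\<in>PiE J A. if \<xi> = \<xi>x then H \<xi> else 0)"
      by (intro sum.cong) (auto simp: indicator_def)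
    also have "\<dots> = H \<xi>x" using \<xi>x finite_PiE[OF J(1), of A] A by (simp add: sum.delta')
    also have "H \<xi>x = H (\<lambda>j. X j x)" by (rule H_local) (simp add: \<xi>x_def)
    finally show ?thesis by simp
  qed
  have indicator_integrable: "integrable M (indicator (Ev \<xi>) :: 'a \<Rightarrow> real)" for \<xi>
    by (rule integrable_real_indicator[OF Ev_event]) (simp add: less_top[symmetric])
  have "integrable M (\<lambda>x. \<Sum>\<xi>\<in>PiE J A. H \<xi> * indicator (Ev \<xi>) x)"
    by (intro Bochner_Integration.integrable_sum Bochner_Integration.integrable_mult_right indicator_integrable)
  then show "integrable M (\<lambda>x. H (\<lambda>j. X j x))"
    by (subst Bochner_Integration.integrable_cong[OF refl H_eq]) auto
  have "(\<integral>x. H (\<lambda>j. X j x) \<partial>M) = (\<integral>x. (\<Sum>\<xi>\<in>PiE J A. H \<xi> * indicator (Ev \<xi>) x) \<partial>M)"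
    by (rule Bochner_Integration.integral_cong[OF refl H_eq])
  also have "\<dots> = (\<Sum>\<xi>\<in>PiE J A. H \<xi> * prob (Ev \<xi>))"
    using Ev_event sets.sets_into_space[OF Ev_event]
    by (subst Bochner_Integration.integral_sum) (auto simp: Int_absorb2 indicator_integrable)
  finally show "(\<integral>x. H (\<lambda>j. X j x) \<partial>M) =
      (\<Sum>\<xi>\<in>PiE J A. H \<xi> * prod_weight J (\<lambda>j v. prob {x\<in>space M. X j x = v}) \<xi>)"
    by (simp add: Ev_prob)
qed

section \<open>Trajectories as functions of the primitive variables\<close>

definition prim_index :: "nat \<Rightarrow> nat \<Rightarrow> (nat + nat \<times> nat) set" where
  "prim_index n k = Inl ` {..<n} \<union> Inr ` ({..<n} \<times> {..<k})"

definition prim_range :: "real set \<Rightarrow> 'w pmf \<Rightarrow> nat + nat \<times> nat \<Rightarrow> (real + 'w) set" where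
  "prim_range S PW j = (case j of Inl _ \<Rightarrow> Inl ` S | Inr _ \<Rightarrow> Inr ` set_pmf PW)"

text \<open>The trajectory as a function of a valuation \<open>\<xi>\<close> of the primitive variables packed by
  \<open>prim_rv\<close>; its first \<open>k\<close> steps only read the coordinates in \<open>prim_index n k\<close>.\<close>
definition traj :: "(real \<Rightarrow> (real \<Rightarrow> real) \<Rightarrow> 'w \<Rightarrow> real) \<Rightarrow> nat
    \<Rightarrow> (nat + nat \<times> nat \<Rightarrow> real + 'w) \<Rightarrow> nat \<Rightarrow> nat \<Rightarrow> real" where
  "traj f n \<xi> = states f n (\<lambda>i \<xi>. projl (\<xi> (Inl i))) (\<lambda>i t \<xi>. projr (\<xi> (Inr (i, t)))) \<xi>"

lemma traj_0 [simp]: "traj f n \<xi> 0 i = projl (\<xi> (Inl i))"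
  by (simp add: traj_def)

lemma traj_Suc [simp]:
  "traj f n \<xi> (Suc k) i = f (traj f n \<xi> k i) (emp n (traj f n \<xi> k)) (projr (\<xi> (Inr (i, k))))"
  by (simp add: traj_def)

lemma states_eq_traj: "states f n s0 w x k = traj f n (\<lambda>j. prim_rv s0 w j x) k"
  unfolding traj_def by (induction k) (simp_all add: prim_rv_def)

lemma states_cong_noise:
  assumes "\<And>i t. i < n \<Longrightarrow> w i t x = w' i t x" "i < n"
  shows "states f n s0 w x k i = states f n s0 w' x k i"
  using assms(2)
proof (induction k arbitrary: i)
  case (Suc k)
  have "emp n (states f n s0 w x k) = emp n (states f n s0 w' x k)"
    by (rule emp_cong) (use Suc in auto)
  then show ?case using Suc assms(1) by simp
qed simp

lemma traj_cong:
  assumes "\<And>j. j \<in> prim_index n K \<Longrightarrow> \<xi> j = \<xi>' j" "k \<le> K" "i < n"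
  shows "traj f n \<xi> k i = traj f n \<xi>' k i"
  using assms(2,3)
proof (induction k arbitrary: i)
  case 0
  then show ?case using assms(1) by (simp add: prim_index_def)
next
  case (Suc k)
  have "emp n (traj f n \<xi> k) = emp n (traj f n \<xi>' k)"
    by (rule emp_cong) (use Suc in auto)
  moreover have "\<xi> (Inr (i, k)) = \<xi>' (Inr (i, k))"
    using Suc assms(1) by (simp add: prim_index_def)
  ultimately show ?case using Suc by simp
qed

lemma emp_traj_cong:
  "(\<And>j. j \<in> prim_index n K \<Longrightarrow> \<xi> j = \<xi>' j) \<Longrightarrow> k \<le> K \<Longrightarrow> emp n (traj f n \<xi> k) = emp n (traj f n \<xi>' k)"
  by (rule emp_cong) (rule traj_cong)

locale mean_field =
  fixes S :: "real set" and PW :: "'w pmf" and f :: "real \<Rightarrow> (real \<Rightarrow> real) \<Rightarrow> 'w \<Rightarrow> real"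
    and n :: nat
  assumes S_fin: "finite S" and S_ne: "S \<noteq> {}" and W_fin: "finite (set_pmf PW)"
    and f_in: "\<And>s m w. s \<in> S \<Longrightarrow> probvec S m \<Longrightarrow> w \<in> set_pmf PW \<Longrightarrow> f s m w \<in> S"
    and n_pos: "1 \<le> n"
begin

abbreviation valuations :: "nat \<Rightarrow> (nat + nat \<times> nat \<Rightarrow> real + 'w) set" where
  "valuations k \<equiv> PiE (prim_index n k) (prim_range S PW)"

abbreviation emp_at :: "(nat + nat \<times> nat \<Rightarrow> real + 'w) \<Rightarrow> nat \<Rightarrow> real \<Rightarrow> real" where
  "emp_at \<xi> k \<equiv> emp n (traj f n \<xi> k)"

definition tracking_error :: "nat \<Rightarrow> (nat + nat \<times> nat \<Rightarrow> real + 'w) \<Rightarrow> real" where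
  "tracking_error k \<xi> = supnorm S (\<lambda>s. emp_at \<xi> k s - (Tbar S PW f ^^ k) (emp_at \<xi> 0) s)"

definition step_error :: "nat \<Rightarrow> (nat + nat \<times> nat \<Rightarrow> real + 'w) \<Rightarrow> real" where
  "step_error k \<xi> = supnorm S (\<lambda>s. emp_at \<xi> (Suc k) s - Tbar S PW f (emp_at \<xi> k) s)"

definition innovation :: "nat \<Rightarrow> real \<Rightarrow> nat \<Rightarrow> (nat + nat \<times> nat \<Rightarrow> real + 'w) \<Rightarrow> real" where
  "innovation k s' i \<xi> =
     (if s' = traj f n \<xi> (Suc k) i then 1 else 0) - Tk PW f s' (traj f n \<xi> k i) (emp_at \<xi> k)"

lemma traj_in_S:
  assumes \<xi>: "\<xi> \<in> Pi (prim_index n K) (prim_range S PW)" and "k \<le> K" "i < n"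
  shows "traj f n \<xi> k i \<in> S"
  using assms(2,3)
proof (induction k arbitrary: i)
  case 0
  then have "Inl i \<in> prim_index n K" by (simp add: prim_index_def)
  from Pi_mem[OF \<xi> this] show ?case by (auto simp: prim_range_def)
next
  case (Suc k)
  then have "Inr (i, k) \<in> prim_index n K" by (simp add: prim_index_def)
  from Pi_mem[OF \<xi> this] have "projr (\<xi> (Inr (i, k))) \<in> set_pmf PW" by (auto simp: prim_range_def)
  moreover have "probvec S (emp_at \<xi> k)" by (rule emp_probvec[OF S_fin n_pos]) (use Suc in auto)
  ultimately show ?case using Suc f_in by simp
qed

lemma emp_at_probvec:
  "\<xi> \<in> Pi (prim_index n K) (prim_range S PW) \<Longrightarrow> k \<le> K \<Longrightarrow> probvec S (emp_at \<xi> k)"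
  by (rule emp_probvec[OF S_fin n_pos]) (rule traj_in_S)

lemma funpow_Tbar_emp_at_probvec:
  "\<xi> \<in> Pi (prim_index n K) (prim_range S PW) \<Longrightarrow> probvec S ((Tbar S PW f ^^ k) (emp_at \<xi> 0))"
  by (rule funpow_Tbar_probvec[OF S_fin W_fin f_in emp_at_probvec]) auto

lemma tracking_error_cong:
  assumes "\<And>j. j \<in> prim_index n K \<Longrightarrow> \<xi> j = \<xi>' j" "k \<le> K"
  shows "tracking_error k \<xi> = tracking_error k \<xi>'"
  unfolding tracking_error_def using emp_traj_cong[OF assms(1)] assms(2) by simp

lemma tracking_error_0: "tracking_error 0 \<xi> = 0"
  unfolding tracking_error_def using supnorm_zero[OF S_ne] by simp

lemma tracking_error_bounds:
  assumes "\<xi> \<in> Pi (prim_index n K) (prim_range S PW)" "k \<le> K"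
  shows "0 \<le> tracking_error k \<xi>" "tracking_error k \<xi> \<le> 1"
  unfolding tracking_error_def
  using supnorm_nonneg[OF S_fin S_ne] supnorm_diff_probvec_le_1[OF S_fin S_ne
      emp_at_probvec[OF assms] funpow_Tbar_emp_at_probvec[OF assms(1)]]
  by auto

lemma tracking_error_Suc_le:
  assumes Tbar_lip: "\<And>p ph. probvec S p \<Longrightarrow> probvec S ph \<Longrightarrow>
      supnorm S (\<lambda>x. Tbar S PW f p x - Tbar S PW f ph x) \<le> K_p * supnorm S (\<lambda>x. p x - ph x)"
    and \<xi>: "\<xi> \<in> Pi (prim_index n (Suc k)) (prim_range S PW)"
  shows "tracking_error (Suc k) \<xi> \<le> step_error k \<xi> + K_p * tracking_error k \<xi>"
proof -
  let ?q = "(Tbar S PW f ^^ k) (emp_at \<xi> 0)"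
  have "tracking_error (Suc k) \<xi>
      \<le> step_error k \<xi> + supnorm S (\<lambda>s. Tbar S PW f (emp_at \<xi> k) s - Tbar S PW f ?q s)"
    unfolding tracking_error_def step_error_def using supnorm_triangle[OF S_fin S_ne] by simp
  also have "\<dots> \<le> step_error k \<xi> + K_p * tracking_error k \<xi>"
    unfolding tracking_error_def
    using Tbar_lip[OF emp_at_probvec[OF \<xi>] funpow_Tbar_emp_at_probvec[OF \<xi>]] by simp
  finally show ?thesis .
qed

lemma abs_innovation_le_1: "\<bar>innovation k s' i \<xi>\<bar> \<le> 1"
proof -
  have "\<bar>(if b then 1 else 0) - T\<bar> \<le> 1" if "0 \<le> T" "T \<le> 1" for b and T :: real
    using that by auto
  then show ?thesis unfolding innovation_def using Tk_nonneg Tk_le_1[OF W_fin] by blast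
qed

lemma step_error_le_innovations:
  assumes \<xi>: "\<xi> \<in> Pi (prim_index n (Suc k)) (prim_range S PW)"
  shows "step_error k \<xi> \<le> (\<Sum>s'\<in>S. \<bar>\<Sum>i<n. innovation k s' i \<xi>\<bar>) / real n"
proof -
  have in_S: "\<And>i. i < n \<Longrightarrow> traj f n \<xi> k i \<in> S" using traj_in_S[OF \<xi>] by simp
  have "emp_at \<xi> (Suc k) s' - Tbar S PW f (emp_at \<xi> k) s' = (\<Sum>i<n. innovation k s' i \<xi>) / real n" for s'
    using emp_eq_average[of n "traj f n \<xi> (Suc k)" s'] Tbar_emp[OF S_fin in_S, where s'=s' and PW=PW and f=f]
    by (simp add: innovation_def sum_subtractf diff_divide_distrib del: traj_Suc)
  then have "step_error k \<xi> = supnorm S (\<lambda>s'. (\<Sum>i<n. innovation k s' i \<xi>) / real n)"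
    by (simp add: step_error_def)
  also have "\<dots> \<le> (\<Sum>s'\<in>S. \<bar>(\<Sum>i<n. innovation k s' i \<xi>) / real n\<bar>)"
    by (rule supnorm_le_sum_abs[OF S_fin S_ne])
  also have "\<dots> = (\<Sum>s'\<in>S. \<bar>\<Sum>i<n. innovation k s' i \<xi>\<bar>) / real n"
    by (simp add: sum_divide_distrib[symmetric])
  finally show ?thesis .
qed

text \<open>Given the past, the noise of node \<open>i\<close> at step \<open>k\<close> averages the \<open>i\<close>-th innovation to zero,
  while the \<open>l\<close>-th innovation does not depend on it.\<close>
lemma innovations_orthogonal:
  assumes il: "i < n" "l < n" "i \<noteq> l" and p_noise: "\<And>u. p (Inr (i, k)) (Inr u) = pmf PW u"
  shows "(\<Sum>\<xi>\<in>valuations (Suc k).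
            (innovation k s' i \<xi> * innovation k s' l \<xi>) * prod_weight (prim_index n (Suc k)) p \<xi>) = 0"
proof (rule sum_PiE_prod_weight_eq_0)
  show "finite (prim_index n (Suc k))" by (simp add: prim_index_def)
  define a :: "nat + nat \<times> nat" where "a = Inr (i, k)"
  show "a \<in> prim_index n (Suc k)" using il by (simp add: a_def prim_index_def)
  fix \<xi> :: "nat + nat \<times> nat \<Rightarrow> real + 'w"
  have past: "(\<xi>(a := v)) j = \<xi> j" if "j \<in> prim_index n k" for j v
    using that by (auto simp: a_def prim_index_def)
  have traj_upd: "traj f n (\<xi>(a := v)) k i' = traj f n \<xi> k i'" if "i' < n" for v i'
    using traj_cong[OF past order.refl that] .
  have emp_upd: "emp_at (\<xi>(a := v)) k = emp_at \<xi> k" for v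
    using emp_traj_cong[OF past order.refl] .
  have noise_l: "(\<xi>(a := v)) (Inr (l, k)) = \<xi> (Inr (l, k))" for v
    using il by (simp add: a_def)
  have other: "innovation k s' l (\<xi>(a := v)) = innovation k s' l \<xi>" for v
    unfolding innovation_def traj_Suc traj_upd[OF il(2)] emp_upd noise_l ..
  define T where "T = Tk PW f s' (traj f n \<xi> k i) (emp_at \<xi> k)"
  have own: "innovation k s' i (\<xi>(a := Inr u))
      = (if s' = f (traj f n \<xi> k i) (emp_at \<xi> k) u then 1 else 0) - T" for u
    unfolding innovation_def traj_Suc traj_upd[OF il(1)] emp_upd T_def by (simp add: a_def)
  have p_a: "p a (Inr u) = pmf PW u" for u by (simp add: a_def p_noise)
  have "(\<Sum>v\<in>prim_range S PW a. p a v * (innovation k s' i (\<xi>(a := v)) * innovation k s' l (\<xi>(a := v))))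
      = (\<Sum>u\<in>set_pmf PW. p a (Inr u) * (innovation k s' i (\<xi>(a := Inr u)) * innovation k s' l (\<xi>(a := Inr u))))"
    by (simp add: a_def prim_range_def sum.reindex)
  also have "\<dots> = (\<Sum>u\<in>set_pmf PW. pmf PW u * ((if s' = f (traj f n \<xi> k i) (emp_at \<xi> k) u then 1 else 0) - T))
          * innovation k s' l \<xi>"
    by (simp only: p_a own other sum_distrib_right mult.assoc)
  also have "(\<Sum>u\<in>set_pmf PW. pmf PW u * ((if s' = f (traj f n \<xi> k i) (emp_at \<xi> k) u then 1 else 0) - T))
      = (\<Sum>u\<in>set_pmf PW. pmf PW u * (if s' = f (traj f n \<xi> k i) (emp_at \<xi> k) u then 1 else 0))
        - T * (\<Sum>u\<in>set_pmf PW. pmf PW u)"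
    by (simp add: right_diff_distrib sum_subtractf sum_distrib_left mult.commute)
  also have "(\<Sum>u\<in>set_pmf PW. pmf PW u * (if s' = f (traj f n \<xi> k i) (emp_at \<xi> k) u then 1 else 0)) = T"
    by (simp add: T_def Tk_def)
  also have "(\<Sum>u\<in>set_pmf PW. pmf PW u) = 1" by (rule sum_pmf_eq_1) (use W_fin in auto)
  finally show "(\<Sum>v\<in>prim_range S PW a. p a v *
      (innovation k s' i (\<xi>(a := v)) * innovation k s' l (\<xi>(a := v)))) = 0"
    by (simp only: mult_1_right diff_self mult_zero_left)
qed

lemma expected_step_error_le:
  assumes p_nonneg: "\<And>j v. 0 \<le> p j v"
    and p_sum: "(\<Sum>\<xi>\<in>valuations (Suc k). prod_weight (prim_index n (Suc k)) p \<xi>) = 1"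
    and p_noise: "\<And>i u. i < n \<Longrightarrow> p (Inr (i, k)) (Inr u) = pmf PW u"
  shows "(\<Sum>\<xi>\<in>valuations (Suc k). step_error k \<xi> * prod_weight (prim_index n (Suc k)) p \<xi>)
           \<le> real (card S) / sqrt (real n)"
proof -
  let ?X = "valuations (Suc k)" and ?w = "prod_weight (prim_index n (Suc k)) p"
  have w_nonneg: "0 \<le> ?w \<xi>" for \<xi> by (rule prod_weight_nonneg[OF p_nonneg])
  have innovation_mean: "(\<Sum>\<xi>\<in>?X. \<bar>\<Sum>i<n. innovation k s' i \<xi>\<bar> * ?w \<xi>) \<le> sqrt (real n)" for s'
  proof -
    have "(\<Sum>\<xi>\<in>?X. \<bar>\<Sum>i<n. innovation k s' i \<xi>\<bar> * ?w \<xi>)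
        \<le> sqrt (\<Sum>\<xi>\<in>?X. (\<Sum>i<n. innovation k s' i \<xi>)\<^sup>2 * ?w \<xi>)"
      by (rule weighted_sum_abs_le_sqrt[OF w_nonneg p_sum])
    also have "\<dots> \<le> sqrt (real n)"
    proof (rule real_sqrt_le_mono, rule weighted_sum_square_le_of_orthogonal[OF w_nonneg p_sum])
      show "\<bar>innovation k s' i \<xi>\<bar> \<le> 1" for i \<xi> by (rule abs_innovation_le_1)
      show "(\<Sum>\<xi>\<in>?X. (innovation k s' i \<xi> * innovation k s' l \<xi>) * ?w \<xi>) = 0"
        if "i < n" "l < n" "i \<noteq> l" for i l
        by (rule innovations_orthogonal) (simp_all add: that p_noise)
    qed
    finally show ?thesis .
  qed
  have "(\<Sum>\<xi>\<in>?X. step_error k \<xi> * ?w \<xi>)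
      \<le> (\<Sum>\<xi>\<in>?X. ((\<Sum>s'\<in>S. \<bar>\<Sum>i<n. innovation k s' i \<xi>\<bar>) / real n) * ?w \<xi>)"
    by (intro sum_mono mult_right_mono step_error_le_innovations w_nonneg) (auto simp: PiE_iff)
  also have "\<dots> = (\<Sum>s'\<in>S. \<Sum>\<xi>\<in>?X. \<bar>\<Sum>i<n. innovation k s' i \<xi>\<bar> * ?w \<xi>) / real n"
    by (simp add: sum_divide_distrib sum_distrib_right sum.swap[of _ ?X])
  also have "\<dots> \<le> (\<Sum>s'\<in>S. sqrt (real n)) / real n"
    by (intro divide_right_mono sum_mono innovation_mean) simp
  also have "\<dots> = real (card S) * sqrt (real n) / real n"
    by simp
  also have "\<dots> = real (card S) / sqrt (real n)"
    by (metis real_div_sqrt of_nat_0_le_iff times_divide_eq_right divide_divide_eq_right)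
  finally show ?thesis .
qed

end

section \<open>Expected tracking error of the estimator\<close>

lemma (in prob_space) measurable_noise:
  assumes "indep_vars (\<lambda>_. count_space UNIV) (prim_rv s0 w) (Inl ` {..<n} \<union> Inr ` ({..<n} \<times> UNIV))"
    and "i < n"
  shows "w i t \<in> measurable M (count_space UNIV)"
proof -
  have "prim_rv s0 w (Inr (i, t)) \<in> measurable M (count_space UNIV)"
    using assms unfolding indep_vars_def2 by auto
  then have "(\<lambda>x. projr (prim_rv s0 w (Inr (i, t)) x)) \<in> measurable M (count_space UNIV)"
    by (rule measurable_compose) simp
  then show ?thesis by (simp add: prim_rv_def)
qed

locale mean_field_sample = mean_field S PW f n + prob_space M
  for S :: "real set" and PW :: "'w pmf" and f :: "real \<Rightarrow> (real \<Rightarrow> real) \<Rightarrow> 'w \<Rightarrow> real"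
    and n :: nat and M :: "'a measure" +
  fixes s0 :: "nat \<Rightarrow> 'a \<Rightarrow> real" and w :: "nat \<Rightarrow> nat \<Rightarrow> 'a \<Rightarrow> 'w"
  assumes indep: "indep_vars (\<lambda>_. count_space UNIV) (prim_rv s0 w) (Inl ` {..<n} \<union> Inr ` ({..<n} \<times> UNIV))"
    and s0_in: "\<And>i x. i < n \<Longrightarrow> x \<in> space M \<Longrightarrow> s0 i x \<in> S"
    and w_in: "\<And>i t x. i < n \<Longrightarrow> x \<in> space M \<Longrightarrow> w i t x \<in> set_pmf PW"
    and w_distr: "\<And>i t. i < n \<Longrightarrow> distr M (count_space UNIV) (w i t) = measure_pmf PW"
begin

abbreviation sample :: "'a \<Rightarrow> nat + nat \<times> nat \<Rightarrow> real + 'w" where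
  "sample x \<equiv> \<lambda>j. prim_rv s0 w j x"

definition point_prob :: "nat + nat \<times> nat \<Rightarrow> real + 'w \<Rightarrow> real" where
  "point_prob j v = prob {x \<in> space M. prim_rv s0 w j x = v}"

lemma sample_in: "x \<in> space M \<Longrightarrow> sample x \<in> Pi (prim_index n k) (prim_range S PW)"
  using s0_in w_in by (auto simp: prim_index_def prim_range_def prim_rv_def)

lemma local_expectation:
  assumes "\<And>\<xi> \<xi>'. (\<And>j. j \<in> prim_index n k \<Longrightarrow> \<xi> j = \<xi>' j) \<Longrightarrow> H \<xi> = H \<xi>'"
  shows "integrable M (\<lambda>x. H (sample x))"
    and "(\<integral>x. H (sample x) \<partial>M) = (\<Sum>\<xi>\<in>valuations k. H \<xi> * prod_weight (prim_index n k) point_prob \<xi>)"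
proof -
  have index: "finite (prim_index n k)" "prim_index n k \<subseteq> Inl ` {..<n} \<union> Inr ` ({..<n} \<times> UNIV)"
    "prim_index n k \<noteq> {}"
    using n_pos by (auto simp: prim_index_def lessThan_empty_iff)
  have range: "finite (prim_range S PW j)" for j
    using S_fin W_fin by (simp add: prim_range_def split: sum.split)
  have in_range: "prim_rv s0 w j x \<in> prim_range S PW j" if "j \<in> prim_index n k" "x \<in> space M" for j x
    using sample_in[OF that(2)] that(1) by auto
  note expectation = indep_vars_finite_range_expectation[OF indep index range in_range assms]
  have point_prob_eq: "point_prob = (\<lambda>j v. prob {x \<in> space M. prim_rv s0 w j x = v})"
    by (simp add: fun_eq_iff point_prob_def)
  show "integrable M (\<lambda>x. H (sample x))" by (rule expectation(1))
  show "(\<integral>x. H (sample x) \<partial>M) = (\<Sum>\<xi>\<in>valuations k. H \<xi> * prod_weight (prim_index n k) point_prob \<xi>)"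
    unfolding point_prob_eq by (rule expectation(2))
qed

lemma point_prob_nonneg: "0 \<le> point_prob j v"
  by (simp add: point_prob_def)

lemma sum_prod_weight_point_prob: "(\<Sum>\<xi>\<in>valuations k. prod_weight (prim_index n k) point_prob \<xi>) = 1"
  using local_expectation(2)[of k "\<lambda>_. 1"] by (simp add: prob_space)

lemma point_prob_noise:
  assumes "i < n"
  shows "point_prob (Inr (i, k)) (Inr u) = pmf PW u"
proof -
  have "point_prob (Inr (i, k)) (Inr u) = prob (w i k -` {u} \<inter> space M)"
    unfolding point_prob_def prim_rv_def by (simp add: vimage_def Int_def conj_commute)
  also have "\<dots> = measure (distr M (count_space UNIV) (w i k)) {u}"
    by (simp add: measure_distr[OF measurable_noise[OF indep assms]])
  also have "\<dots> = pmf PW u"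
    by (simp add: w_distr[OF assms] measure_pmf_single)
  finally show ?thesis .
qed

definition expected_error :: "nat \<Rightarrow> real" where
  "expected_error k = (\<integral>x. tracking_error k (sample x) \<partial>M)"

lemma integrable_tracking_error: "integrable M (\<lambda>x. tracking_error k (sample x))"
  by (rule local_expectation(1)[of k]) (rule tracking_error_cong, auto)

lemma expected_error_eq_sum:
  "k \<le> K \<Longrightarrow>
   expected_error k = (\<Sum>\<xi>\<in>valuations K. tracking_error k \<xi> * prod_weight (prim_index n K) point_prob \<xi>)"
  unfolding expected_error_def by (rule local_expectation(2)) (rule tracking_error_cong)

lemma expected_error_0: "expected_error 0 = 0"
  by (simp add: expected_error_def tracking_error_0)

lemma expected_error_bounds: "0 \<le> expected_error k" "expected_error k \<le> 1"
  unfolding expected_error_def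
  using tracking_error_bounds[OF sample_in order.refl]
  by (auto intro!: integral_nonneg_AE integral_le_const integrable_tracking_error)

lemma expected_error_Suc_le:
  assumes Tbar_lip: "\<And>p ph. probvec S p \<Longrightarrow> probvec S ph \<Longrightarrow>
      supnorm S (\<lambda>x. Tbar S PW f p x - Tbar S PW f ph x) \<le> K_p * supnorm S (\<lambda>x. p x - ph x)"
  shows "expected_error (Suc k) \<le> real (card S) / sqrt (real n) + K_p * expected_error k"
proof -
  let ?w = "prod_weight (prim_index n (Suc k)) point_prob"
  have w_nonneg: "0 \<le> ?w \<xi>" for \<xi> by (rule prod_weight_nonneg[OF point_prob_nonneg])
  have "expected_error (Suc k) = (\<Sum>\<xi>\<in>valuations (Suc k). tracking_error (Suc k) \<xi> * ?w \<xi>)"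
    by (rule expected_error_eq_sum) simp
  also have "\<dots> \<le> (\<Sum>\<xi>\<in>valuations (Suc k). (step_error k \<xi> + K_p * tracking_error k \<xi>) * ?w \<xi>)"
    by (intro sum_mono mult_right_mono tracking_error_Suc_le[OF Tbar_lip] w_nonneg) (auto simp: PiE_iff)
  also have "\<dots> = (\<Sum>\<xi>\<in>valuations (Suc k). step_error k \<xi> * ?w \<xi>) + K_p * expected_error k"
    by (simp add: expected_error_eq_sum[of k "Suc k"] distrib_right sum.distrib sum_distrib_left mult.assoc)
  also have "\<dots> \<le> real (card S) / sqrt (real n) + K_p * expected_error k"
    using expected_step_error_le[OF point_prob_nonneg sum_prod_weight_point_prob point_prob_noise] by simp
  finally show ?thesis .
qed

lemma nn_integral_discounted_cost_le:
  fixes c :: "(real \<Rightarrow> real) \<Rightarrow> (real \<Rightarrow> real) \<Rightarrow> nat \<Rightarrow> real"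
  assumes \<gamma>: "0 < \<gamma>" and K_c: "0 \<le> K_c"
    and c_lip: "\<And>m mh. probvec S m \<Longrightarrow> probvec S mh \<Longrightarrow> c m mh 0 \<le> K_c * supnorm S (\<lambda>x. m x - mh x)"
    and summable: "summable (\<lambda>k. \<gamma> ^ k * expected_error k)"
  shows "(\<integral>\<^sup>+ x. (\<Sum>k. ennreal (\<gamma> ^ k *
            c (emp n (states f n s0 w x k)) ((Tbar S PW f ^^ k) (emp n (states f n s0 w x 0))) 0)) \<partial>M)
         \<le> ennreal (K_c * (\<Sum>k. \<gamma> ^ k * expected_error k))"
proof -
  let ?g = "\<lambda>k x. K_c * (\<gamma> ^ k * tracking_error k (sample x))"
  have pointwise: "\<gamma> ^ k * c (emp n (states f n s0 w x k)) ((Tbar S PW f ^^ k) (emp n (states f n s0 w x 0))) 0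
      \<le> ?g k x" if x: "x \<in> space M" for x k
  proof -
    have "c (emp_at (sample x) k) ((Tbar S PW f ^^ k) (emp_at (sample x) 0)) 0 \<le> K_c * tracking_error k (sample x)"
      unfolding tracking_error_def
      by (rule c_lip[OF emp_at_probvec funpow_Tbar_emp_at_probvec]) (use sample_in[OF x] in auto)
    then show ?thesis using \<gamma> by (simp add: states_eq_traj mult.left_commute mult_left_mono)
  qed
  have g_integrable: "integrable M (?g k)" for k
    using integrable_tracking_error by simp
  have g_nonneg: "0 \<le> ?g k x" if "x \<in> space M" for x k
    using tracking_error_bounds(1)[OF sample_in[OF that] order.refl] K_c \<gamma> by simp
  have "(\<integral>\<^sup>+ x. (\<Sum>k. ennreal (\<gamma> ^ k *
            c (emp n (states f n s0 w x k)) ((Tbar S PW f ^^ k) (emp n (states f n s0 w x 0))) 0)) \<partial>M)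
      \<le> (\<integral>\<^sup>+ x. (\<Sum>k. ennreal (?g k x)) \<partial>M)"
    by (intro nn_integral_mono suminf_le ennreal_leI pointwise summableI)
  also have "\<dots> = (\<Sum>k. \<integral>\<^sup>+ x. ennreal (?g k x) \<partial>M)"
    by (rule nn_integral_suminf)
      (rule measurable_compose[OF borel_measurable_integrable[OF g_integrable] measurable_ennreal])
  also have "\<dots> = (\<Sum>k. ennreal (K_c * (\<gamma> ^ k * expected_error k)))"
    using nn_integral_eq_integral[OF g_integrable] g_nonneg by (simp add: expected_error_def)
  also have "\<dots> = ennreal (K_c * (\<Sum>k. \<gamma> ^ k * expected_error k))"
    using suminf_ennreal2[OF _ summable_mult[OF summable]] suminf_mult[OF summable, of K_c]
      K_c \<gamma> expected_error_bounds(1) by simp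
  finally show ?thesis .
qed

lemma discounted_cost_le:
  fixes c :: "(real \<Rightarrow> real) \<Rightarrow> (real \<Rightarrow> real) \<Rightarrow> nat \<Rightarrow> real"
  assumes \<gamma>: "0 < \<gamma>" "\<gamma> < 1" and K_c: "0 \<le> K_c"
    and c_lip: "\<And>m mh. probvec S m \<Longrightarrow> probvec S mh \<Longrightarrow> c m mh 0 \<le> K_c * supnorm S (\<lambda>x. m x - mh x)"
    and Tbar_lip: "\<And>p ph. probvec S p \<Longrightarrow> probvec S ph \<Longrightarrow>
      supnorm S (\<lambda>x. Tbar S PW f p x - Tbar S PW f ph x) \<le> K_p * supnorm S (\<lambda>x. p x - ph x)"
    and contr: "\<gamma> * K_p < 1"
  shows "(\<integral>\<^sup>+ x. (\<Sum>k. ennreal (\<gamma> ^ k *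
            c (emp n (states f n s0 w x k)) ((Tbar S PW f ^^ k) (emp n (states f n s0 w x 0))) 0)) \<partial>M)
         \<le> ennreal (\<gamma> * K_c / ((1 - \<gamma>) * (1 - \<gamma> * K_p)) * (real (card S) / sqrt (real n)))"
proof -
  have "expected_error (Suc k) \<le> real (card S) / sqrt (real n) + K_p * expected_error k" for k
    using Tbar_lip by (rule expected_error_Suc_le)
  note discounted = discounted_sum_le_of_linear_recursion[where E=expected_error,
      OF \<gamma> contr expected_error_0 expected_error_bounds this]
  have "K_c * (\<Sum>k. \<gamma> ^ k * expected_error k)
      \<le> K_c * (\<gamma> * (real (card S) / sqrt (real n)) / ((1 - \<gamma>) * (1 - \<gamma> * K_p)))"
    using discounted(2) K_c by (rule mult_left_mono)
  also have "\<dots> = \<gamma> * K_c / ((1 - \<gamma>) * (1 - \<gamma> * K_p)) * (real (card S) / sqrt (real n))"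
    by (simp add: mult_ac)
  finally show ?thesis
    by (intro order_trans[OF nn_integral_discounted_cost_le[where c=c, OF \<gamma>(1) K_c c_lip discounted(1)]] ennreal_leI)
qed

end

lemma (in prob_space) noise_in_support_AE:
  assumes indep: "indep_vars (\<lambda>_. count_space UNIV) (prim_rv s0 w) (Inl ` {..<n} \<union> Inr ` ({..<n} \<times> UNIV))"
    and w_distr: "\<forall>i<n. \<forall>t. distr M (count_space UNIV) (w i t) = measure_pmf PW"
  shows "AE x in M. \<forall>i<n. \<forall>t. w i t x \<in> set_pmf PW"
proof -
  have "AE x in M. i < n \<longrightarrow> w i t x \<in> set_pmf PW" for i t
  proof (cases "i < n")
    case True
    have "AE y in distr M (count_space UNIV) (w i t). y \<in> set_pmf PW"
      unfolding w_distr[rule_format, OF True] by (rule AE_measure_pmf)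
    then show ?thesis by (auto dest: AE_distrD[OF measurable_noise[OF indep True]])
  qed simp
  then show ?thesis by (simp add: AE_all_countable)
qed

text \<open>Noise values outside the support of \<open>PW\<close> occur only on a null set; redirecting them to
  \<open>w0\<close> keeps every trajectory inside \<open>S\<close> pointwise without changing any distribution.\<close>
lemma (in prob_space) mean_field_sample_restrict_noise:
  assumes mf: "mean_field S PW f n"
    and indep: "indep_vars (\<lambda>_. count_space UNIV) (prim_rv s0 w) (Inl ` {..<n} \<union> Inr ` ({..<n} \<times> UNIV))"
    and s0_in: "\<forall>i<n. \<forall>x\<in>space M. s0 i x \<in> S"
    and w_distr: "\<forall>i<n. \<forall>t. distr M (count_space UNIV) (w i t) = measure_pmf PW"
    and w0: "w0 \<in> set_pmf PW"
  defines "w' \<equiv> \<lambda>i t x. if w i t x \<in> set_pmf PW then w i t x else w0"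
  shows "mean_field_sample S PW f n M s0 w'"
    and "AE x in M. \<forall>i<n. \<forall>t. w i t x = w' i t x"
proof -
  show AE_eq: "AE x in M. \<forall>i<n. \<forall>t. w i t x = w' i t x"
    using noise_in_support_AE[OF indep w_distr] by eventually_elim (auto simp: w'_def)
  have "prim_rv s0 w' = (\<lambda>j x. case_sum Inl (\<lambda>v. Inr (if v \<in> set_pmf PW then v else w0)) (prim_rv s0 w j x))"
    by (auto simp: fun_eq_iff w'_def prim_rv_def split: sum.split)
  then have indep': "indep_vars (\<lambda>_. count_space UNIV) (prim_rv s0 w') (Inl ` {..<n} \<union> Inr ` ({..<n} \<times> UNIV))"
    by (simp only:) (rule indep_vars_compose2[OF indep], simp)
  have "distr M (count_space UNIV) (w' i t) = measure_pmf PW" if "i < n" for i t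
  proof -
    have "distr M (count_space UNIV) (w' i t) = distr M (count_space UNIV) (w i t)"
      using AE_eq that
      by (intro distr_cong_AE measurable_noise[OF indep'] measurable_noise[OF indep]) auto
    then show ?thesis using w_distr that by simp
  qed
  then show "mean_field_sample S PW f n M s0 w'"
    using mf prob_space_axioms indep' s0_in w0
    by (intro mean_field_sample.intro mean_field_sample_axioms.intro) (auto simp: w'_def)
qed

theorem theorem6:
  fixes S :: "real set" and PW :: "'w pmf"
    and f :: "real \<Rightarrow> (real \<Rightarrow> real) \<Rightarrow> 'w \<Rightarrow> real"
    and c :: "(real \<Rightarrow> real) \<Rightarrow> (real \<Rightarrow> real) \<Rightarrow> nat \<Rightarrow> real"
    and \<gamma> K_T K_c K_p :: real
  assumes S_fin: "finite S" and S_ne: "S \<noteq> {}"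
    and W_fin: "finite (set_pmf PW)"
    and f_in: "\<And>s m w. s \<in> S \<Longrightarrow> probvec S m \<Longrightarrow> w \<in> set_pmf PW \<Longrightarrow> f s m w \<in> S"
    and c_nonneg: "\<And>m mh a. probvec S m \<Longrightarrow> probvec S mh \<Longrightarrow> a \<in> {0, 1} \<Longrightarrow> 0 \<le> c m mh a"
    and gamma: "0 < \<gamma>" "\<gamma> < 1"
    and K_T: "0 < K_T"
    and T_lip: "\<And>s' s m m'. s' \<in> S \<Longrightarrow> s \<in> S \<Longrightarrow> probvec S m \<Longrightarrow> probvec S m' \<Longrightarrow>
        \<bar>Tk PW f s' s m - Tk PW f s' s m'\<bar> \<le> K_T * supnorm S (\<lambda>x. m x - m' x)"
    and K_c: "0 < K_c"
    and c_lip: "\<And>m mh a. probvec S m \<Longrightarrow> probvec S mh \<Longrightarrow> a \<in> {0, 1} \<Longrightarrow>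
        c m mh a \<le> K_c * supnorm S (\<lambda>x. m x - mh x)"
    and K_p: "0 < K_p"
    and Tbar_lip: "\<And>p ph. probvec S p \<Longrightarrow> probvec S ph \<Longrightarrow>
        supnorm S (\<lambda>x. Tbar S PW f p x - Tbar S PW f ph x) \<le> K_p * supnorm S (\<lambda>x. p x - ph x)"
    and contr: "\<gamma> * K_p < 1"
  shows "\<exists>C>0. \<forall>(n::nat) (M::'a measure) s0 w. n \<ge> 1 \<longrightarrow> prob_space M \<longrightarrow>
     prob_space.indep_vars M (\<lambda>_. count_space UNIV) (prim_rv s0 w) (Inl ` {..<n} \<union> Inr ` ({..<n} \<times> UNIV)) \<longrightarrow>
     (\<forall>i<n. \<forall>x\<in>space M. s0 i x \<in> S) \<longrightarrow>
     (\<forall>i<n. \<forall>t. distr M (count_space UNIV) (w i t) = measure_pmf PW) \<longrightarrow>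
     (\<integral>\<^sup>+ x. (\<Sum>k. ennreal (\<gamma> ^ k *
          c (emp n (states f n s0 w x k))
            (((Tbar S PW f) ^^ k) (emp n (states f n s0 w x 0))) 0)) \<partial>M)
       \<le> ennreal (\<gamma> * K_c / ((1 - \<gamma>) * (1 - \<gamma> * K_p)) * (C / sqrt (real n)))"
proof (intro exI[of _ "real (card S)"] conjI allI impI)
  show "0 < real (card S)" using S_fin S_ne by (simp add: card_gt_0_iff)
  fix n :: nat and M :: "'a measure" and s0 w
  assume n: "1 \<le> n" and "prob_space M"
    and indep: "prob_space.indep_vars M (\<lambda>_. count_space UNIV) (prim_rv s0 w) (Inl ` {..<n} \<union> Inr ` ({..<n} \<times> UNIV))"
    and s0_in: "\<forall>i<n. \<forall>x\<in>space M. s0 i x \<in> S"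
    and w_distr: "\<forall>i<n. \<forall>t. distr M (count_space UNIV) (w i t) = measure_pmf PW"
  interpret prob_space M by fact
  \<comment> \<open>Only the Lipschitz constant \<open>K_p\<close> of \<open>Tbar\<close> enters.\<close>
  obtain w0 where w0: "w0 \<in> set_pmf PW" using set_pmf_not_empty[of PW] by blast
  have "mean_field S PW f n" using S_fin S_ne W_fin f_in n by unfold_locales
  note restrict = mean_field_sample_restrict_noise[OF this indep s0_in w_distr w0]
  let ?w' = "\<lambda>i t x. if w i t x \<in> set_pmf PW then w i t x else w0"
  let ?cost = "\<lambda>w. \<integral>\<^sup>+ x. (\<Sum>k. ennreal (\<gamma> ^ k *
      c (emp n (states f n s0 w x k)) (((Tbar S PW f) ^^ k) (emp n (states f n s0 w x 0))) 0)) \<partial>M"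
  have "AE x in M. \<forall>k. emp n (states f n s0 w x k) = emp n (states f n s0 ?w' x k)"
    using restrict(2) by eventually_elim (blast intro: emp_cong states_cong_noise)
  then have "?cost w = ?cost ?w'"
    by (rule nn_integral_cong_AE[OF eventually_mono]) simp
  also have "\<dots> \<le> ennreal (\<gamma> * K_c / ((1 - \<gamma>) * (1 - \<gamma> * K_p)) * (real (card S) / sqrt (real n)))"
  proof (rule mean_field_sample.discounted_cost_le[OF restrict(1) gamma _ _ Tbar_lip contr])
    show "0 \<le> K_c" using K_c by simp
    show "c m mh 0 \<le> K_c * supnorm S (\<lambda>x. m x - mh x)" if "probvec S m" "probvec S mh" for m mh
      using c_lip[OF that] by simp
  qed
  finally show "?cost w \<le> ennreal (\<gamma> * K_c / ((1 - \<gamma>) * (1 - \<gamma> * K_p)) * (real (card S) / sqrt (real n)))" .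
qed

end
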